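(* Let $(X_v)_{v\in V}$ be a BN on the DAG $\mathcal G$ with states $\mathcal A$, let $f:\mathcal A\to\mathcal B$ and $U_v=f(X_v)$. Let $v\in V$ and $b_{pa(v)}\in\mathcal B^{pa(v)}$ be such that $f^{-1}(b_{pa(v)})$ consists of a single element $a_{pa(v)}\in\mathcal A^{pa(v)}$. Then for every $b_{nd^*(v)}\in\mathcal B^{nd^*(v)}$ with $b_{nd^*(v)}|_{pa(v)}=b_{pa(v)}$ and $\mathbb P(U_{nd(v)}=b_{nd(v)})>0$, $$\mathbb P(U_v=b_v\mid U_{nd(v)}=b_{nd(v)})=\mathbb P(U_v=b_v\mid U_{pa(v)}=b_{pa(v)}).$$
   Context: $\mathcal G=(V,E)$ is a finite DAG; $pa(v)$ is the set of parents of $v$; $nd(v)$ is the set of non-descendants of $v$ (vertices other than $v$ not reachable from $v$ by a directed path), $nd^*(v)=nd(v)\cup\{v\}$. A BN on $\mathcal G$ with states $\mathcal A$ (finite set) is a random vector $(X_v)_{v\in V}$ with values in $\mathcal A^V$ whose law factorises as $\mathbb P(X=x)=\prod_{v}\mathbb P(X_v=x_v\mid X_{pa(v)}=x_{pa(v)})$. $f:\mathcal A\to\mathcal B$ is a surjection onto a finite set, applied coordinatewise; $f^{-1}(b_W)\subseteq\mathcal A^W$ is the preimage of $b_W\in\mathcal B^W$; for $W'\subseteq W$, $b_{W'}=b_W|_{W'}$ is the restriction. $\mathbb P(U_W=b_W)$ is the joint probability of the coordinates in $W$. *)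

theory Defs
  imports "HOL-Probability.Probability" "HOL-Library.FuncSet"
begin

text \<open>DAG given by an edge relation E on a finite vertex type 'v; (u,w) \<in> E means u \<rightarrow> w.\<close>

definition parents :: "('v \<times> 'v) set \<Rightarrow> 'v \<Rightarrow> 'v set" where
  "parents E v = {u. (u, v) \<in> E}"

definition nondesc :: "('v \<times> 'v) set \<Rightarrow> 'v \<Rightarrow> 'v set" where
  "nondesc E v = {w. w \<noteq> v \<and> (v, w) \<notin> E\<^sup>+}"

definition coord_event :: "'v set \<Rightarrow> ('v \<Rightarrow> 'a) \<Rightarrow> ('v \<Rightarrow> 'a) set" where
  "coord_event W a = {x. \<forall>w\<in>W. x w = a w}"

text \<open>Event that the coordinates in W of U = f(X) agree with b.\<close>
definition img_event :: "('a \<Rightarrow> 'b) \<Rightarrow> 'v set \<Rightarrow> ('v \<Rightarrow> 'b) \<Rightarrow> ('v \<Rightarrow> 'a) set" where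
  "img_event f W b = {x. \<forall>w\<in>W. f (x w) = b w}"

text \<open>Elementary conditional probability P(A | C) = P(A \<inter> C) / P(C) (= 0 if P(C) = 0).\<close>
definition cond_prob :: "'x pmf \<Rightarrow> 'x set \<Rightarrow> 'x set \<Rightarrow> real" where
  "cond_prob p A C = measure_pmf.prob p (A \<inter> C) / measure_pmf.prob p C"

text \<open>p is the law of a BN on the DAG E (vertex set = UNIV of the finite type 'v).\<close>
definition is_BN :: "('v::finite \<times> 'v) set \<Rightarrow> ('v \<Rightarrow> 'a::finite) pmf \<Rightarrow> bool" where
  "is_BN E p \<longleftrightarrow> acyclic E \<and>
     (\<forall>x. pmf p x = (\<Prod>v\<in>UNIV. cond_prob p (coord_event {v} x) (coord_event (parents E v) x)))"

end

theory Submission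
  imports Defs
begin

text \<open>
  Replacing the rows of the conditional probability tables that belong to null parent
  configurations by uniform rows turns the law of the BN into a product of Markov kernels.
  Summing such a product over the coordinates outside a parent-closed set of vertices simply
  deletes the factors outside that set. The non-descendants N of v form such a set, as does
  N together with v, which gives the local Markov property
  P(X_v = z_v, X_N = z_N) = P(X_N = z_N) P(X_v = z_v | X_pa(v) = z_pa(v)).
  On the event U_N = b_N the parents of v are pinned to the unique preimage a_pa(v) of b_pa(v),
  so conditionally on it X_v has the law of X_v given X_pa(v) = a_pa(v); trivially the same holds
  conditionally on U_pa(v) = b_pa(v). Both sides of the theorem are therefore the sum of
  P(X_v = a | X_pa(v) = a_pa(v)) over a in the preimage of b_v.
\<close>

definition ancestral :: "('v \<times> 'v) set \<Rightarrow> 'v set \<Rightarrow> bool" where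
  "ancestral E T \<longleftrightarrow> (\<forall>w\<in>T. parents E w \<subseteq> T)"

lemma not_mem_parents_self: "acyclic E \<Longrightarrow> v \<notin> parents E v"
  unfolding parents_def acyclic_def by auto

lemma parents_subset_nondesc:
  assumes "acyclic E"
  shows "parents E v \<subseteq> nondesc E v"
proof
  fix u assume u: "u \<in> parents E v"
  have "(v, u) \<notin> E\<^sup>+"
  proof
    assume "(v, u) \<in> E\<^sup>+"
    with u have "(v, v) \<in> E\<^sup>+" unfolding parents_def by (simp add: trancl_into_trancl)
    with assms show False unfolding acyclic_def by blast
  qed
  with u assms show "u \<in> nondesc E v"
    using not_mem_parents_self unfolding nondesc_def by fastforce
qed

lemma ancestral_nondesc: "ancestral E (nondesc E v)"
  unfolding ancestral_def nondesc_def parents_def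
  by (auto intro: trancl_into_trancl)

lemma ancestral_insert: "ancestral E T \<Longrightarrow> parents E v \<subseteq> T \<Longrightarrow> ancestral E (insert v T)"
  unfolding ancestral_def by auto

lemma exists_parents_subset_outside:
  fixes E :: "('v::finite \<times> 'v) set"
  assumes "acyclic E" and "w \<notin> T"
  obtains z where "z \<notin> T" and "parents E z \<subseteq> T"
proof -
  have "wf E" using assms(1) by (simp add: finite_acyclic_wf)
  then obtain z where "z \<in> - T" and "\<And>y. (y, z) \<in> E \<Longrightarrow> y \<notin> - T"
    using wfE_min[of E w "- T"] assms(2) by blast
  then show thesis using that unfolding parents_def by blast
qed

lemma coord_event_fun_upd: "z \<notin> S \<Longrightarrow> coord_event S (x(z := a)) = coord_event S x"
  unfolding coord_event_def by auto

lemma coord_event_cong: "(\<forall>w\<in>S. x w = y w) \<Longrightarrow> coord_event S x = coord_event S y"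
  unfolding coord_event_def by auto

lemma coord_event_Int: "coord_event A x \<inter> coord_event B x = coord_event (A \<union> B) x"
  unfolding coord_event_def by auto

lemma sum_coord_event_insert:
  fixes g :: "('v::finite \<Rightarrow> 'a::finite) \<Rightarrow> 'c::comm_monoid_add"
  assumes "z \<notin> T"
  shows "(\<Sum>y\<in>coord_event T x. g y) = (\<Sum>a\<in>UNIV. \<Sum>y\<in>coord_event (insert z T) (x(z := a)). g y)"
proof -
  have slices: "{y \<in> coord_event T x. y z = a} = coord_event (insert z T) (x(z := a))" for a
    using assms unfolding coord_event_def by auto
  have "(\<Sum>y\<in>coord_event T x. g y) = (\<Sum>a\<in>UNIV. \<Sum>y\<in>{y \<in> coord_event T x. y z = a}. g y)"
    by (rule sum.group[symmetric]) auto
  then show ?thesis by (simp only: slices)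
qed

text \<open>
  A vertex outside \<open>T\<close> all of whose parents lie in \<open>T\<close> occurs in no other factor, so it is
  summed out first; its kernel then sums to one.
\<close>
lemma sum_prod_kernel_ancestral:
  fixes K :: "'v::finite \<Rightarrow> ('v \<Rightarrow> 'a::finite) \<Rightarrow> 'c::comm_semiring_1"
  assumes acyc: "acyclic E"
    and local: "\<And>u y y'. \<forall>w\<in>insert u (parents E u). y w = y' w \<Longrightarrow> K u y = K u y'"
    and normalised: "\<And>u y. (\<Sum>a\<in>UNIV. K u (y(u := a))) = 1"
    and "ancestral E T"
  shows "(\<Sum>y\<in>coord_event T x. \<Prod>u\<in>UNIV. K u y) = (\<Prod>u\<in>T. K u x)"
  using \<open>ancestral E T\<close>
proof (induction "card (- T)" arbitrary: T x rule: less_induct)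
  case less
  show ?case
  proof (cases "T = UNIV")
    case True
    then have "coord_event T x = {x}" unfolding coord_event_def by auto
    with True show ?thesis by simp
  next
    case False
    then obtain z where z: "z \<notin> T" "parents E z \<subseteq> T"
      using exists_parents_subset_outside[OF acyc] by blast
    have IH: "(\<Sum>y\<in>coord_event (insert z T) x'. \<Prod>u\<in>UNIV. K u y) = (\<Prod>u\<in>insert z T. K u x')" for x'
    proof (rule less.hyps)
      show "card (- insert z T) < card (- T)"
        using z(1) by (metis Compl_insert card_Diff1_less finite ComplI)
      show "ancestral E (insert z T)" using less.prems z(2) by (rule ancestral_insert)
    qed
    have off_T: "K u (x(z := a)) = K u x" if "u \<in> T" for u a
      using that z(1) less.prems unfolding ancestral_def by (intro local) auto
    have "(\<Sum>y\<in>coord_event T x. \<Prod>u\<in>UNIV. K u y) = (\<Sum>a\<in>UNIV. \<Prod>u\<in>insert z T. K u (x(z := a)))"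
      by (simp add: sum_coord_event_insert[OF z(1)] IH)
    also have "\<dots> = (\<Sum>a\<in>UNIV. K z (x(z := a))) * (\<Prod>u\<in>T. K u x)"
      using z(1) by (simp add: off_T sum_distrib_right)
    finally show ?thesis by (simp add: normalised)
  qed
qed

lemma prob_eq_sum_pmf:
  fixes p :: "('v::finite \<Rightarrow> 'a::finite) pmf"
  shows "measure_pmf.prob p S = (\<Sum>x\<in>S. pmf p x)"
  by (simp add: measure_measure_pmf_finite)

lemma prob_coord_event_insert:
  "measure_pmf.prob p (coord_event (insert v S) z)
     = measure_pmf.prob p (coord_event S z) * cond_prob p (coord_event {v} z) (coord_event S z)"
proof (cases "measure_pmf.prob p (coord_event S z) = 0")
  case True
  have "measure_pmf.prob p (coord_event (insert v S) z) \<le> measure_pmf.prob p (coord_event S z)"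
    by (rule measure_pmf.finite_measure_mono) (auto simp: coord_event_def)
  with True show ?thesis by (simp add: antisym)
next
  case False
  then show ?thesis using coord_event_Int[of "{v}" z S] by (simp add: cond_prob_def)
qed

text \<open>
  On a parent configuration of probability zero \<open>cond_prob\<close> is \<open>0\<close>; the uniform row there
  makes every row of the table a probability distribution.
\<close>
definition bn_kernel :: "('v \<times> 'v) set \<Rightarrow> ('v \<Rightarrow> 'a::finite) pmf \<Rightarrow> 'v \<Rightarrow> ('v \<Rightarrow> 'a) \<Rightarrow> real" where
  "bn_kernel E p u y =
     (if measure_pmf.prob p (coord_event (parents E u) y) = 0 then 1 / real CARD('a)
      else cond_prob p (coord_event {u} y) (coord_event (parents E u) y))"

lemma bn_kernel_cong:
  "\<forall>w\<in>insert u (parents E u). y w = y' w \<Longrightarrow> bn_kernel E p u y = bn_kernel E p u y'"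
  unfolding bn_kernel_def
  by (simp add: coord_event_cong[of "parents E u" y y'] coord_event_cong[of "{u}" y y'])

lemma sum_bn_kernel:
  fixes p :: "('v::finite \<Rightarrow> 'a::finite) pmf"
  assumes "acyclic E"
  shows "(\<Sum>a\<in>UNIV. bn_kernel E p u (y(u := a))) = 1"
proof -
  let ?pa = "coord_event (parents E u) y"
  have pa_upd: "coord_event (parents E u) (y(u := a)) = ?pa" for a
    using not_mem_parents_self[OF assms] by (rule coord_event_fun_upd)
  show ?thesis
  proof (cases "measure_pmf.prob p ?pa = 0")
    case True
    then show ?thesis unfolding bn_kernel_def pa_upd by simp
  next
    case False
    have "(\<Sum>a\<in>UNIV. bn_kernel E p u (y(u := a)))
        = (\<Sum>a\<in>UNIV. measure_pmf.prob p (coord_event (insert u (parents E u)) (y(u := a))))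
            / measure_pmf.prob p ?pa"
      using False coord_event_Int[of "{u}" "y(u := a)" "parents E u" for a]
      by (simp add: bn_kernel_def cond_prob_def pa_upd sum_divide_distrib)
    also have "\<dots> = 1"
      using False not_mem_parents_self[OF assms]
      by (simp add: prob_eq_sum_pmf sum_coord_event_insert[symmetric])
    finally show ?thesis .
  qed
qed

text \<open>
  The factorisation in \<open>is_BN\<close> only bounds \<open>pmf p\<close> by the product of kernels; equality
  follows because both sides sum to one.
\<close>
lemma pmf_eq_prod_bn_kernel:
  fixes p :: "('v::finite \<Rightarrow> 'a::finite) pmf"
  assumes bn: "is_BN E p"
  shows "pmf p x = (\<Prod>u\<in>UNIV. bn_kernel E p u x)"
proof -
  have acyc: "acyclic E" using bn unfolding is_BN_def by simp
  let ?q = "\<lambda>y. \<Prod>u\<in>UNIV. bn_kernel E p u y"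
  have le: "pmf p y \<le> ?q y" for y
  proof -
    have "pmf p y = (\<Prod>u\<in>UNIV. cond_prob p (coord_event {u} y) (coord_event (parents E u) y))"
      using bn unfolding is_BN_def by blast
    also have "\<dots> \<le> ?q y"
      by (rule prod_mono) (auto simp: bn_kernel_def cond_prob_def)
    finally show ?thesis .
  qed
  have "coord_event {} x = UNIV" unfolding coord_event_def by simp
  then have "(\<Sum>y\<in>UNIV. ?q y) = 1"
    using sum_prod_kernel_ancestral[OF acyc bn_kernel_cong sum_bn_kernel[OF acyc],
        where T = "{}" and x = x]
    by (simp add: ancestral_def)
  moreover have "(\<Sum>y\<in>UNIV. pmf p y) = 1"
    using sum_pmf_eq_1[of UNIV p] by simp
  ultimately have "(\<Sum>y\<in>UNIV. ?q y - pmf p y) = 0" by (simp add: sum_subtractf)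
  then have "\<forall>y\<in>UNIV. ?q y - pmf p y = 0"
    by (subst sum_nonneg_eq_0_iff[symmetric]) (auto simp: le)
  then show ?thesis by simp
qed

lemma prob_coord_event_ancestral:
  fixes p :: "('v::finite \<Rightarrow> 'a::finite) pmf"
  assumes bn: "is_BN E p" and "ancestral E T"
  shows "measure_pmf.prob p (coord_event T x) = (\<Prod>u\<in>T. bn_kernel E p u x)"
proof -
  have acyc: "acyclic E" using bn unfolding is_BN_def by simp
  show ?thesis
    unfolding prob_eq_sum_pmf pmf_eq_prod_bn_kernel[OF bn]
    by (rule sum_prod_kernel_ancestral[OF acyc bn_kernel_cong sum_bn_kernel[OF acyc] assms(2)])
qed

lemma bn_local_markov:
  fixes p :: "('v::finite \<Rightarrow> 'a::finite) pmf"
  assumes bn: "is_BN E p"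
  shows "measure_pmf.prob p (coord_event (insert v (nondesc E v)) z)
       = measure_pmf.prob p (coord_event (nondesc E v) z)
         * cond_prob p (coord_event {v} z) (coord_event (parents E v) z)"
proof -
  let ?N = "nondesc E v" and ?pa = "coord_event (parents E v) z"
  have acyc: "acyclic E" using bn unfolding is_BN_def by simp
  have pa_N: "parents E v \<subseteq> ?N" using acyc by (rule parents_subset_nondesc)
  have "v \<notin> ?N" unfolding nondesc_def by simp
  then have factor: "measure_pmf.prob p (coord_event (insert v ?N) z)
      = measure_pmf.prob p (coord_event ?N z) * bn_kernel E p v z"
    by (simp add: prob_coord_event_ancestral[OF bn ancestral_nondesc]
        prob_coord_event_ancestral[OF bn ancestral_insert[OF ancestral_nondesc pa_N]] mult.commute)
  show ?thesis
  proof (cases "measure_pmf.prob p ?pa = 0")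
    case True
    have "coord_event ?N z \<subseteq> ?pa" using pa_N unfolding coord_event_def by auto
    then have "measure_pmf.prob p (coord_event ?N z) \<le> measure_pmf.prob p ?pa"
      by (rule measure_pmf.finite_measure_mono) simp
    with True factor show ?thesis by (simp add: antisym)
  next
    case False
    with factor show ?thesis by (simp add: bn_kernel_def)
  qed
qed

lemma prob_Int_determined:
  fixes p :: "('v::finite \<Rightarrow> 'a::finite) pmf"
  assumes determined: "\<And>x y. x \<in> C \<Longrightarrow> \<forall>w\<in>T. x w = y w \<Longrightarrow> y \<in> C"
  shows "measure_pmf.prob p (C \<inter> S)
       = (\<Sum>r\<in>(\<lambda>x. restrict x T) ` C. measure_pmf.prob p (coord_event T r \<inter> S))"
proof -
  let ?R = "(\<lambda>x. restrict x T) ` C"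
  have slices: "{x \<in> C \<inter> S. restrict x T = r} = coord_event T r \<inter> S" if "r \<in> ?R" for r
  proof -
    from that obtain x0 where "x0 \<in> C" and r: "r = restrict x0 T" by blast
    then have "x \<in> C" if "x \<in> coord_event T r" for x
      using that determined[of x0 x] unfolding coord_event_def by simp
    then show ?thesis using r unfolding coord_event_def by (auto simp: restrict_def fun_eq_iff)
  qed
  have "(\<Sum>x\<in>C \<inter> S. pmf p x) = (\<Sum>r\<in>?R. \<Sum>x\<in>{x \<in> C \<inter> S. restrict x T = r}. pmf p x)"
    by (rule sum.group[symmetric]) auto
  also have "\<dots> = (\<Sum>r\<in>?R. \<Sum>x\<in>coord_event T r \<inter> S. pmf p x)"
    by (rule sum.cong[OF refl], subst slices) auto
  finally show ?thesis unfolding prob_eq_sum_pmf .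
qed

lemma prob_vertex_value_factor:
  fixes p :: "('v::finite \<Rightarrow> 'a::finite) pmf"
  assumes "v \<notin> T"
    and determined: "\<And>x y. x \<in> C \<Longrightarrow> \<forall>w\<in>T. x w = y w \<Longrightarrow> y \<in> C"
    and factor: "\<And>y. y \<in> C \<Longrightarrow> measure_pmf.prob p (coord_event (insert v T) (y(v := a)))
                                  = measure_pmf.prob p (coord_event T y) * q"
  shows "measure_pmf.prob p {x \<in> C. x v = a} = measure_pmf.prob p C * q"
proof -
  let ?R = "(\<lambda>x. restrict x T) ` C"
  have R_C: "r \<in> C" if "r \<in> ?R" for r
    using that determined by auto
  have "coord_event T r \<inter> {x. x v = a} = coord_event (insert v T) (r(v := a))" for r
    using \<open>v \<notin> T\<close> unfolding coord_event_def by auto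
  then have "measure_pmf.prob p {x \<in> C. x v = a}
      = (\<Sum>r\<in>?R. measure_pmf.prob p (coord_event (insert v T) (r(v := a))))"
    using prob_Int_determined[OF determined, where p = p and S = "{x. x v = a}"]
    by (simp add: Collect_conj_eq)
  also have "\<dots> = (\<Sum>r\<in>?R. measure_pmf.prob p (coord_event T r)) * q"
    by (simp add: factor R_C sum_distrib_right)
  also have "\<dots> = measure_pmf.prob p C * q"
    using prob_Int_determined[OF determined, where p = p and S = UNIV] by simp
  finally show ?thesis .
qed

lemma prob_img_event_vertex_Int:
  fixes p :: "('v::finite \<Rightarrow> 'a::finite) pmf"
  assumes "v \<notin> T"
    and factor: "\<And>y a. y \<in> img_event f T b \<Longrightarrow>
                   measure_pmf.prob p (coord_event (insert v T) (y(v := a)))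
                     = measure_pmf.prob p (coord_event T y) * q a"
  shows "measure_pmf.prob p (img_event f {v} b \<inter> img_event f T b)
       = measure_pmf.prob p (img_event f T b) * (\<Sum>a\<in>f -` {b v}. q a)"
proof -
  let ?C = "img_event f T b"
  have "measure_pmf.prob p (img_event f {v} b \<inter> ?C)
      = (\<Sum>a\<in>f -` {b v}. \<Sum>x\<in>{x \<in> img_event f {v} b \<inter> ?C. x v = a}. pmf p x)"
    unfolding prob_eq_sum_pmf by (rule sum.group[symmetric]) (auto simp: img_event_def)
  also have "\<dots> = (\<Sum>a\<in>f -` {b v}. measure_pmf.prob p {x \<in> ?C. x v = a})"
    unfolding prob_eq_sum_pmf by (intro sum.cong) (auto simp: img_event_def intro!: sum.cong)
  also have "\<dots> = (\<Sum>a\<in>f -` {b v}. measure_pmf.prob p ?C * q a)"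
    using \<open>v \<notin> T\<close> factor
    by (intro sum.cong refl prob_vertex_value_factor) (auto simp: img_event_def)
  finally show ?thesis by (simp add: sum_distrib_left)
qed

lemma cond_prob_img_event_vertex:
  fixes p :: "('v::finite \<Rightarrow> 'a::finite) pmf"
  assumes "v \<notin> T" and "S \<subseteq> T"
    and unique: "(\<Pi>\<^sub>E w\<in>S. f -` {b w}) = {a\<^sub>S}"
    and markov: "\<And>z. measure_pmf.prob p (coord_event (insert v T) z)
                     = measure_pmf.prob p (coord_event T z) * cond_prob p (coord_event {v} z) (coord_event S z)"
    and pos: "measure_pmf.prob p (img_event f T b) > 0"
  shows "cond_prob p (img_event f {v} b) (img_event f T b)
       = (\<Sum>a\<in>f -` {b v}. cond_prob p (coord_event {v} (a\<^sub>S(v := a))) (coord_event S a\<^sub>S))"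
proof -
  have pinned: "\<forall>w\<in>S. y w = a\<^sub>S w" if "y \<in> img_event f T b" for y
  proof -
    have "restrict y S \<in> (\<Pi>\<^sub>E w\<in>S. f -` {b w})"
      using that \<open>S \<subseteq> T\<close> unfolding img_event_def by auto
    with unique show ?thesis by (metis restrict_apply' singletonD)
  qed
  have factor: "measure_pmf.prob p (coord_event (insert v T) (y(v := a)))
      = measure_pmf.prob p (coord_event T y)
        * cond_prob p (coord_event {v} (a\<^sub>S(v := a))) (coord_event S a\<^sub>S)"
    if "y \<in> img_event f T b" for y a
  proof -
    have "coord_event S (y(v := a)) = coord_event S a\<^sub>S"
      and "coord_event {v} (y(v := a)) = coord_event {v} (a\<^sub>S(v := a))"
      using pinned[OF that] \<open>v \<notin> T\<close> \<open>S \<subseteq> T\<close> unfolding coord_event_def by auto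
    then show ?thesis
      using markov[of "y(v := a)"] by (simp add: coord_event_fun_upd[OF \<open>v \<notin> T\<close>])
  qed
  have "measure_pmf.prob p (img_event f {v} b \<inter> img_event f T b)
      = measure_pmf.prob p (img_event f T b)
        * (\<Sum>a\<in>f -` {b v}. cond_prob p (coord_event {v} (a\<^sub>S(v := a))) (coord_event S a\<^sub>S))"
    using \<open>v \<notin> T\<close> factor by (rule prob_img_event_vertex_Int)
  with pos show ?thesis unfolding cond_prob_def by simp
qed

theorem mainTheorem3:
  fixes E :: "('v::finite \<times> 'v) set"
    and p :: "('v \<Rightarrow> 'a::finite) pmf"
    and f :: "'a \<Rightarrow> 'b"
    and v :: 'v
    and b :: "'v \<Rightarrow> 'b"
  assumes "is_BN E p"
    and "surj f"
    and "\<exists>a. (\<Pi>\<^sub>E w\<in>parents E v. f -` {b w}) = {a}"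
    and "measure_pmf.prob p (img_event f (nondesc E v) b) > 0"
  shows "cond_prob p (img_event f {v} b) (img_event f (nondesc E v) b)
       = cond_prob p (img_event f {v} b) (img_event f (parents E v) b)"
proof -
  obtain a where a: "(\<Pi>\<^sub>E w\<in>parents E v. f -` {b w}) = {a}" using assms(3) by blast
  have acyc: "acyclic E" using assms(1) unfolding is_BN_def by simp
  have pa_N: "parents E v \<subseteq> nondesc E v" using acyc by (rule parents_subset_nondesc)
  have "img_event f (nondesc E v) b \<subseteq> img_event f (parents E v) b"
    using pa_N unfolding img_event_def by auto
  then have "measure_pmf.prob p (img_event f (nondesc E v) b)
      \<le> measure_pmf.prob p (img_event f (parents E v) b)"
    by (rule measure_pmf.finite_measure_mono) simp
  with assms(4) have pos_pa: "measure_pmf.prob p (img_event f (parents E v) b) > 0"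
    by linarith
  have "cond_prob p (img_event f {v} b) (img_event f (nondesc E v) b)
      = (\<Sum>a'\<in>f -` {b v}. cond_prob p (coord_event {v} (a(v := a'))) (coord_event (parents E v) a))"
    by (rule cond_prob_img_event_vertex[OF _ pa_N a bn_local_markov[OF assms(1)] assms(4)])
      (simp add: nondesc_def)
  moreover have "cond_prob p (img_event f {v} b) (img_event f (parents E v) b)
      = (\<Sum>a'\<in>f -` {b v}. cond_prob p (coord_event {v} (a(v := a'))) (coord_event (parents E v) a))"
    by (rule cond_prob_img_event_vertex[OF not_mem_parents_self[OF acyc] order_refl a
          prob_coord_event_insert pos_pa])
  ultimately show ?thesis by simp
qed

end
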